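(* Let $c<-14$, $u\in\Omega_0^M$ with $\kappa(u)=c$, and let $v$ be a node of the binary tree $B_\Lambda(u)$. Define a sequence $v_0=v,v_1,v_2,\dots$ by $v_{i+1}=Q_x(v_i)$ if $\tau(Q_x(v_i))<\tau(v_i)$; otherwise $v_{i+1}=Q_y(v_i)$ if $\tau(Q_y(v_i))<\tau(v_i)$; otherwise $v_{i+1}=Q_z(v_i)$. Then there is $n$ (depending only on $c$ and $v$) with $v_n=u$, and $v_0,\dots,v_n$ is the unique path from $v$ to $u$ in $B_\Lambda(u)$.
   Context: $\kappa(x,y,z)=-x^2-y^2+z^2+xyz-2$; for $u=(x,y,z)$, $\bar z(u)=-xy-z$ and $\tau(u)=-z\,\bar z(u)$. $Q_x(x,y,z)=(yz-x,y,z)$, $Q_y(x,y,z)=(x,xz-y,z)$, $Q_z(x,y,z)=(x,y,-xy-z)$, $\Lambda=\langle Q_x,Q_y,Q_z\rangle$. $\Omega_0^M=\{(x,y,z): z<-2,\ xy+z>2\}$. For $u\in\Omega_0^M$ the binary tree $B_\Lambda(u)$ is defined inductively: $u$ is the root; its two descendents are $Q_x(u)$ and $Q_y(u)$; if $v\ne u$ is a node with parent $\hat v$ and $v=\lambda\hat v$ with $\lambda\in\{Q_x,Q_y,Q_z\}$, then the two descendents of $v$ are $\lambda_1v$ and $\lambda_2v$ where $\{\lambda_1,\lambda_2\}=\{Q_x,Q_y,Q_z\}\setminus\{\lambda\}$. *)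

theory Defs
  imports Complex_Main
begin

type_synonym pt = "real \<times> real \<times> real"

definition kappa :: "pt \<Rightarrow> real" where
  "kappa u = (case u of (x,y,z) \<Rightarrow> - (x^2) - y^2 + z^2 + x*y*z - 2)"

definition zbar :: "pt \<Rightarrow> real" where
  "zbar u = (case u of (x,y,z) \<Rightarrow> -x*y - z)"

definition tau :: "pt \<Rightarrow> real" where
  "tau u = (case u of (x,y,z) \<Rightarrow> - z * zbar u)"

definition Qx :: "pt \<Rightarrow> pt" where "Qx u = (case u of (x,y,z) \<Rightarrow> (y*z - x, y, z))"
definition Qy :: "pt \<Rightarrow> pt" where "Qy u = (case u of (x,y,z) \<Rightarrow> (x, x*z - y, z))"
definition Qz :: "pt \<Rightarrow> pt" where "Qz u = (case u of (x,y,z) \<Rightarrow> (x, y, -x*y - z))"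

definition Omega0M :: "pt set" where
  "Omega0M = {(x,y,z). z < -2 \<and> x*y + z > 2}"

datatype gen = GX | GY | GZ

fun gapp :: "gen \<Rightarrow> pt \<Rightarrow> pt" where
  "gapp GX = Qx" | "gapp GY = Qy" | "gapp GZ = Qz"

text \<open>Nodes of the binary tree B_Lambda(u) are addressed by the list of generators
  applied from the root (first element applied first): the first generator is Qx or Qy,
  and consecutive generators are distinct.\<close>
fun tree_addr :: "gen list \<Rightarrow> bool" where
  "tree_addr [] = True"
| "tree_addr (g # gs) = (g \<noteq> GZ \<and> successively (\<noteq>) (g # gs))"

definition node_val :: "pt \<Rightarrow> gen list \<Rightarrow> pt" where
  "node_val u w = fold gapp w u"

definition desc_step :: "pt \<Rightarrow> pt" where
  "desc_step v = (if tau (Qx v) < tau v then Qx v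
                  else if tau (Qy v) < tau v then Qy v else Qz v)"

end

theory Submission
  imports Defs
begin

text \<open>
  Write \<open>p = x y z\<close>. Then \<open>\<tau>(Q\<^sub>x v) - \<tau>(v) = y\<^sup>2 z\<^sup>2 - 2p\<close> and
  \<open>\<tau>(Q\<^sub>y v) - \<tau>(v) = x\<^sup>2 z\<^sup>2 - 2p\<close>, and \<open>Q\<^sub>x, Q\<^sub>y, Q\<^sub>z\<close> are involutions. Along the tree one
  propagates an invariant on \<open>p\<close> and \<open>z\<^sup>2 > 4\<close> saying that at a node entered by \<open>Q\<^sub>x\<close>
  (resp. \<open>Q\<^sub>y\<close>) exactly \<open>Q\<^sub>x\<close> (resp. \<open>Q\<^sub>y\<close>) lowers \<open>\<tau>\<close>, while at a node entered by \<open>Q\<^sub>z\<close> neither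
  does. Hence each descent step undoes the last edge, i.e. moves to the parent. The root
  behaves like a node entered by \<open>Q\<^sub>z\<close>; the value of \<open>\<kappa>\<close> and the bound \<open>c < -14\<close> play no role.
\<close>

lemma tree_addr_iff_successively: "tree_addr w \<longleftrightarrow> successively (\<noteq>) (GZ # w)"
  by (cases w) auto

lemma tree_addr_snoc: "tree_addr (w @ [g]) \<longleftrightarrow> tree_addr w \<and> g \<noteq> last (GZ # w)"
  unfolding tree_addr_iff_successively
  by (simp only: append_Cons[symmetric] successively_append_iff) auto

lemma tree_addr_take:
  assumes "tree_addr w"
  shows "tree_addr (take k w)"
proof -
  have "successively (\<noteq>) (take (Suc k) (GZ # w) @ drop (Suc k) (GZ # w))"
    using assms by (simp add: tree_addr_iff_successively del: take_Suc_Cons drop_Suc_Cons)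
  then show ?thesis
    unfolding tree_addr_iff_successively successively_append_iff by simp
qed

lemma node_val_snoc: "node_val u (w @ [g]) = gapp g (node_val u w)"
  by (simp add: node_val_def)

lemma gapp_gapp: "gapp g (gapp g v) = v"
  by (cases g; cases v) (auto simp: Qx_def Qy_def Qz_def)

lemma tau_Qx_less_iff: "tau (Qx (x, y, z)) < tau (x, y, z) \<longleftrightarrow> y\<^sup>2 * z\<^sup>2 < 2 * (x * y * z)"
  by (simp add: tau_def zbar_def Qx_def power2_eq_square algebra_simps)

lemma tau_Qy_less_iff: "tau (Qy (x, y, z)) < tau (x, y, z) \<longleftrightarrow> x\<^sup>2 * z\<^sup>2 < 2 * (x * y * z)"
  by (simp add: tau_def zbar_def Qy_def power2_eq_square algebra_simps)

lemma twice_less_of_mult_eq: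
  fixes a b p z :: real
  assumes p: "0 < p" and b: "0 \<le> b" "b < 2 * p"
    and ab: "a * b = p\<^sup>2 * z\<^sup>2" and z: "4 < z\<^sup>2"
  shows "2 * p < a"
proof -
  have "(2 * p) * (2 * p) < p\<^sup>2 * z\<^sup>2"
    using mult_strict_left_mono[OF z, of "p\<^sup>2"] p by (simp add: power2_eq_square)
  also have "\<dots> = a * b"
    by (simp add: ab)
  finally have lt: "(2 * p) * (2 * p) < a * b" .
  moreover have "0 < (2 * p) * (2 * p)"
    using p by simp
  ultimately have "0 < a * b"
    by linarith
  then have "0 < a"
    using b(1) by (auto simp: zero_less_mult_iff)
  then have "a * b < a * (2 * p)"
    using b(2) by (simp add: mult_strict_left_mono)
  with lt have "(2 * p) * (2 * p) < (2 * p) * a"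
    by (simp add: mult.commute)
  then show ?thesis
    using p by simp
qed

text \<open>\<open>g\<close> labels the edge entering the node \<open>v\<close>, with \<open>GZ\<close> at the root.\<close>
definition tree_inv :: "gen \<Rightarrow> pt \<Rightarrow> bool" where
  "tree_inv g v = (case v of (x, y, z) \<Rightarrow> 4 < z\<^sup>2 \<and>
     (case g of
        GZ \<Rightarrow> x * y * z < 0
      | GX \<Rightarrow> 0 < x * y * z \<and> y\<^sup>2 * z\<^sup>2 < 2 * (x * y * z)
      | GY \<Rightarrow> 0 < x * y * z \<and> x\<^sup>2 * z\<^sup>2 < 2 * (x * y * z)))"

lemma tree_inv_Omega0M: "u \<in> Omega0M \<Longrightarrow> tree_inv GZ u"
proof -
  assume "u \<in> Omega0M"
  then obtain x y z where u: "u = (x, y, z)" and "z < -2" "2 < x * y + z"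
    by (auto simp: Omega0M_def)
  then have "0 < x * y"
    by simp
  moreover have "2\<^sup>2 < (- z)\<^sup>2"
    using \<open>z < -2\<close> by (intro power_strict_mono) auto
  ultimately show ?thesis
    using \<open>z < -2\<close> by (simp add: tree_inv_def u mult_pos_neg)
qed

lemma tree_inv_Qx_Qy:
  assumes "tree_inv g (x, y, z)"
  shows "if g = GX then y\<^sup>2 * z\<^sup>2 < 2 * (x * y * z) else 2 * (x * y * z) < y\<^sup>2 * z\<^sup>2" (is ?Qx)
    and "if g = GY then x\<^sup>2 * z\<^sup>2 < 2 * (x * y * z) else 2 * (x * y * z) < x\<^sup>2 * z\<^sup>2" (is ?Qy)
proof -
  have prod: "(x\<^sup>2 * z\<^sup>2) * (y\<^sup>2 * z\<^sup>2) = (x * y * z)\<^sup>2 * z\<^sup>2"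
    by (simp add: power_mult_distrib)
  have X: "0 \<le> x\<^sup>2 * z\<^sup>2" and Y: "0 \<le> y\<^sup>2 * z\<^sup>2"
    by simp_all
  from assms consider
      (GX) "g = GX" "0 < x * y * z" "y\<^sup>2 * z\<^sup>2 < 2 * (x * y * z)" "4 < z\<^sup>2"
    | (GY) "g = GY" "0 < x * y * z" "x\<^sup>2 * z\<^sup>2 < 2 * (x * y * z)" "4 < z\<^sup>2"
    | (GZ) "g = GZ" "x * y * z < 0"
    by (cases g) (auto simp: tree_inv_def)
  then have "?Qx \<and> ?Qy"
  proof cases
    case GX
    have "2 * (x * y * z) < x\<^sup>2 * z\<^sup>2"
      using GX Y prod by (intro twice_less_of_mult_eq[of _ "y\<^sup>2 * z\<^sup>2" _ z])
    with GX show ?thesis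
      by simp
  next
    case GY
    have "2 * (x * y * z) < y\<^sup>2 * z\<^sup>2"
      using GY X prod by (intro twice_less_of_mult_eq[of _ "x\<^sup>2 * z\<^sup>2" _ z]) (simp_all add: mult.commute)
    with GY show ?thesis
      by simp
  next
    case GZ
    have "2 * (x * y * z) < y\<^sup>2 * z\<^sup>2" "2 * (x * y * z) < x\<^sup>2 * z\<^sup>2"
      using GZ X Y by linarith+
    with GZ show ?thesis
      by simp
  qed
  then show ?Qx ?Qy
    by simp_all
qed

lemma desc_step_tree_inv:
  assumes "tree_inv g v"
  shows "desc_step v = gapp g v"
proof -
  obtain x y z where v: "v = (x, y, z)"
    by (cases v)
  have "tau (Qx v) < tau v \<longleftrightarrow> g = GX" and "tau (Qy v) < tau v \<longleftrightarrow> g = GY"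
    using tree_inv_Qx_Qy[OF assms[unfolded v]]
    by (auto simp: v tau_Qx_less_iff tau_Qy_less_iff split: if_splits)
  then show ?thesis
    by (cases g) (simp_all add: desc_step_def)
qed

lemma tree_inv_gapp:
  assumes inv: "tree_inv g v" and "h \<noteq> g"
  shows "tree_inv h (gapp h v)"
proof -
  obtain x y z where v: "v = (x, y, z)"
    by (cases v)
  have z: "4 < z\<^sup>2"
    using inv by (cases g) (simp_all add: tree_inv_def v)
  note Qx_Qy = tree_inv_Qx_Qy[OF inv[unfolded v]]
  show ?thesis
  proof (cases h)
    case GX
    have "2 * (x * y * z) < y\<^sup>2 * z\<^sup>2"
      using Qx_Qy(1) GX \<open>h \<noteq> g\<close> by auto
    moreover have "0 \<le> y\<^sup>2 * z\<^sup>2"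
      by simp
    ultimately have "x * y * z < y\<^sup>2 * z\<^sup>2" "2 * (x * y * z) < y\<^sup>2 * z\<^sup>2"
      by linarith+
    moreover have "(y * z - x) * y * z = y\<^sup>2 * z\<^sup>2 - x * y * z"
      by (simp add: power2_eq_square algebra_simps)
    ultimately show ?thesis
      using z by (simp add: tree_inv_def v Qx_def GX)
  next
    case GY
    have "2 * (x * y * z) < x\<^sup>2 * z\<^sup>2"
      using Qx_Qy(2) GY \<open>h \<noteq> g\<close> by auto
    moreover have "0 \<le> x\<^sup>2 * z\<^sup>2"
      by simp
    ultimately have "x * y * z < x\<^sup>2 * z\<^sup>2" "2 * (x * y * z) < x\<^sup>2 * z\<^sup>2"
      by linarith+
    moreover have "x * (x * z - y) * z = x\<^sup>2 * z\<^sup>2 - x * y * z"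
      by (simp add: power2_eq_square algebra_simps)
    ultimately show ?thesis
      using z by (simp add: tree_inv_def v Qy_def GY)
  next
    case GZ
    have "0 < x * y * z"
      using inv GZ \<open>h \<noteq> g\<close> by (cases g) (simp_all add: tree_inv_def v)
    moreover have "0 \<le> x\<^sup>2 * y\<^sup>2"
      by simp
    moreover have "x * y * (- (x * y) - z) = - (x\<^sup>2 * y\<^sup>2) - x * y * z"
      and "(- (x * y) - z)\<^sup>2 = x\<^sup>2 * y\<^sup>2 + 2 * (x * y * z) + z\<^sup>2"
      by (simp_all add: power2_eq_square algebra_simps)
    ultimately have "x * y * (- (x * y) - z) < 0" and "4 < (- (x * y) - z)\<^sup>2"
      using z by linarith+
    then show ?thesis
      by (simp add: tree_inv_def v Qz_def GZ)
  qed
qed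

lemma tree_inv_node_val:
  assumes "u \<in> Omega0M" "tree_addr w"
  shows "tree_inv (last (GZ # w)) (node_val u w)"
  using assms(2)
proof (induction w rule: rev_induct)
  case Nil
  then show ?case
    using tree_inv_Omega0M[OF assms(1)] by (simp add: node_val_def)
next
  case (snoc g w)
  then show ?case
    using tree_inv_gapp by (simp add: tree_addr_snoc node_val_snoc)
qed

lemma desc_step_node_val:
  assumes "u \<in> Omega0M" "tree_addr w" "w \<noteq> []"
  shows "desc_step (node_val u w) = node_val u (butlast w)"
proof -
  obtain w' g where w: "w = w' @ [g]"
    using assms(3) rev_exhaust by blast
  have "tree_inv g (node_val u w)"
    using tree_inv_node_val[OF assms(1,2)] by (simp add: w)
  then show ?thesis
    by (simp add: desc_step_tree_inv w node_val_snoc gapp_gapp)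
qed

lemma funpow_desc_step_node_val:
  assumes "u \<in> Omega0M" "tree_addr w" "i \<le> length w"
  shows "(desc_step ^^ i) (node_val u w) = node_val u (take (length w - i) w)"
  using assms(3)
proof (induction i)
  case 0
  then show ?case
    by simp
next
  case (Suc i)
  have "(desc_step ^^ Suc i) (node_val u w) = desc_step (node_val u (take (length w - i) w))"
    using Suc by simp
  also have "\<dots> = node_val u (butlast (take (length w - i) w))"
    using Suc.prems by (intro desc_step_node_val assms(1) tree_addr_take assms(2)) auto
  also have "butlast (take (length w - i) w) = take (length w - Suc i) w"
    using Suc.prems by (simp add: butlast_take)
  finally show ?case .
qed

theorem mainTheorem10:
  fixes c :: real and u :: pt and w :: "gen list"
  assumes "c < -14" and "u \<in> Omega0M" and "kappa u = c"
    and "tree_addr w"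
  shows "\<exists>n. (desc_step ^^ n) (node_val u w) = u \<and>
             n = length w \<and>
             (\<forall>i\<le>n. (desc_step ^^ i) (node_val u w) = node_val u (take (n - i) w))"
proof (intro exI conjI)
  show path: "\<forall>i\<le>length w. (desc_step ^^ i) (node_val u w) = node_val u (take (length w - i) w)"
    using funpow_desc_step_node_val[OF assms(2,4)] by blast
  show "(desc_step ^^ length w) (node_val u w) = u"
    using path by (simp add: node_val_def)
qed simp

end
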